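(* Let $X=[x_1,\dots,x_m]\in\mathbb{R}^{d_x\times m}$ be a data matrix and $Y\in\mathbb{R}^{d_y\times m}$ a label matrix, and let $\tilde X=\begin{bmatrix}X^T & \mathbf{1}_m\end{bmatrix}^T\in\mathbb{R}^{(d_x+1)\times m}$. For a function $h:\mathbb{R}\to\mathbb{R}$ applied entrywise, consider the empirical risk of the one-hidden-layer network $$\ell(W_1,W_2,b_1,b_2)=\tfrac12\big\|W_2\,h(W_1X+b_1\mathbf{1}_m^T)+b_2\mathbf{1}_m^T-Y\big\|_F^2,$$ with $W_1\in\mathbb{R}^{d_1\times d_x}$, $b_1\in\mathbb{R}^{d_1}$, $W_2\in\mathbb{R}^{d_y\times d_1}$, $b_2\in\mathbb{R}^{d_y}$. Suppose that: (1) $d_y=1$, and there is no matrix $R\in\mathbb{R}^{1\times(d_x+1)}$ with $Y=R\tilde X$; (2) the data points $x_1,\dots,x_m$ are pairwise distinct; (3) $h(x)=\max\{s_+x,0\}+\min\{s_-x,0\}$ for constants $s_+>0$, $s_-\ge 0$, $s_+\neq s_-$; (4) $d_1\ge 2$. Then $\ell$ has a local minimum that is not a global minimum (a spurious local minimum) whose risk equals the linear least squares risk $\min_{R\in\mathbb{R}^{1\times(d_x+1)}}\tfrac12\|R\tilde X-Y\|_F^2$. Moreover, there are infinitely many such local minima.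
   Context: $\mathbf{1}_m$ denotes the all-ones column vector in $\mathbb{R}^m$, and $\|\cdot\|_F$ the Frobenius norm. A spurious local minimum is a local minimum of $\ell$ at which $\ell$ is strictly larger than its infimum over all parameters. *)

theory Defs
  imports "HOL-Analysis.Analysis"
begin

text \<open>Data matrix X has rows indexed by 'dx (coordinates) and columns indexed by 'm
(data points); Y is the 1 x m label matrix (d_y = 1), represented as a vector in real^'m.\<close>

definition leaky :: "real \<Rightarrow> real \<Rightarrow> real \<Rightarrow> real" where
  "leaky sp sm x = max (sp * x) 0 + min (sm * x) 0"

definition risk ::
  "(real \<Rightarrow> real) \<Rightarrow> real^'m^'dx \<Rightarrow> real^'m \<Rightarrow>
   (real^'dx^'d1) \<times> (real^'d1) \<times> (real^'d1) \<times> real \<Rightarrow> real" where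
  "risk h X Y p = (case p of (W1, b1, W2, b2) \<Rightarrow>
     (1/2) * (norm (W2 v* (\<chi> k j. h ((W1 ** X) $ k $ j + b1 $ k)) + (\<chi> j. b2) - Y))\<^sup>2)"

text \<open>Linear least squares risk: R = [w, c] with R Xtilde = w X + c 1^T.\<close>
definition ls_risk :: "real^'m^'dx \<Rightarrow> real^'m \<Rightarrow> real" where
  "ls_risk X Y = Inf {(1/2) * (norm (w v* X + (\<chi> j. c) - Y))\<^sup>2 | (w :: real^'dx) (c :: real). True}"

definition is_local_min :: "('a::topological_space \<Rightarrow> real) \<Rightarrow> 'a \<Rightarrow> bool" where
  "is_local_min f p \<longleftrightarrow> (\<exists>U. open U \<and> p \<in> U \<and> (\<forall>q\<in>U. f p \<le> f q))"

definition is_spurious_local_min :: "('a::topological_space \<Rightarrow> real) \<Rightarrow> 'a \<Rightarrow> bool" where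
  "is_spurious_local_min f p \<longleftrightarrow> is_local_min f p \<and> f p > (INF q. f q)"

end

theory Submission
  imports Defs
begin

text \<open>On the open region where every hidden preactivation is positive, h acts linearly, so the
network computes an affine function of the data and its risk is at least the least squares risk.
The least squares fit can be realised inside this region in infinitely many ways (shift the hidden
biases up and the output bias down), and each such point is a local minimum.

It is spurious: as the data points are distinct, the point of largest norm among those where the
least squares residual r is nonzero can be cut off from the others by a hyperplane. A unit with
that affine preactivation has output whose inner product with r is s+ - s- times a
single nonzero term, because r is orthogonal to all affine fits. Adding a small multiple of this
unit to the least squares fit, using a second hidden unit, strictly lowers the risk.\<close>

type_synonym ('dx, 'd1) params = "(real^'dx^'d1) \<times> (real^'d1) \<times> (real^'d1) \<times> real"

lemma exists_scaleR_closer: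
  fixes g r :: "'a::real_inner"
  assumes "inner g r \<noteq> 0"
  shows "\<exists>e. norm (e *\<^sub>R g - r) < norm r"
proof (cases "inner r g > 0")
  case True
  then obtain v where "v > 0" "\<forall>e>0. e \<le> v \<longrightarrow> norm (e *\<^sub>R g - r) < norm r"
    using closer_points_lemma[of r g] by blast
  then show ?thesis by (meson order_refl)
next
  case False
  then have "inner r (- g) > 0"
    using assms by (simp add: inner_commute)
  then obtain v where "v > 0" "\<forall>e>0. e \<le> v \<longrightarrow> norm (e *\<^sub>R (- g) - r) < norm r"
    using closer_points_lemma[of r "- g"] by blast
  then have "norm ((- v) *\<^sub>R g - r) < norm r" by simp
  then show ?thesis by blast
qed

lemma closest_point_subspace_orthogonal:
  fixes S :: "'a::euclidean_space set"
  assumes "subspace S" "x \<in> S"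
  shows "inner (a - closest_point S a) x = 0"
proof -
  let ?p = "closest_point S a"
  have S: "convex S" "closed S" "S \<noteq> {}"
    using assms by (auto simp: subspace_imp_convex closed_subspace subspace_0)
  have p: "?p \<in> S" by (rule closest_point_in_set[OF S(2,3)])
  have "t * inner (a - ?p) x \<le> 0" for t
    using closest_point_dot[OF S(1,2), of "?p + t *\<^sub>R x" a] assms p
    by (simp add: subspace_add subspace_scale)
  from this[of 1] this[of "-1"] show ?thesis by simp
qed

lemma vector_matrix_mult_nth: "((u :: real^'dx) v* (X :: real^'m^'dx)) $ j = inner u (column j X)"
  by (simp add: vector_matrix_mult_def column_def inner_vec_def mult.commute)

definition affine_fits :: "real^'m^'dx \<Rightarrow> (real^'m) set" where
  "affine_fits X = {w v* X + (\<chi> j. c) | (w :: real^'dx) c. True}"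

lemma subspace_affine_fits: "subspace (affine_fits X)"
proof (unfold subspace_def, intro conjI ballI allI)
  show "0 \<in> affine_fits X"
    unfolding affine_fits_def
    by (rule CollectI, rule exI[of _ 0], rule exI[of _ 0]) (simp add: vec_eq_iff vector_matrix_mult_def)
next
  fix f g assume "f \<in> affine_fits X" "g \<in> affine_fits X"
  then obtain w c w' c' where "f = w v* X + (\<chi> j. c)" "g = w' v* X + (\<chi> j. c')"
    by (auto simp: affine_fits_def)
  then show "f + g \<in> affine_fits X"
    unfolding affine_fits_def
    by (intro CollectI exI[of _ "w + w'"] exI[of _ "c + c'"])
      (simp add: vec_eq_iff vector_matrix_mult_def sum.distrib distrib_right)
next
  fix f and a :: real assume "f \<in> affine_fits X"
  then obtain w c where "f = w v* X + (\<chi> j. c)" by (auto simp: affine_fits_def)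
  then show "a *\<^sub>R f \<in> affine_fits X"
    unfolding affine_fits_def
    by (intro CollectI exI[of _ "a *\<^sub>R w"] exI[of _ "a * c"])
      (simp add: vec_eq_iff vector_matrix_mult_def sum_distrib_left algebra_simps)
qed

lemma closest_point_in_affine_fits: "closest_point (affine_fits X) Y \<in> affine_fits X"
  using subspace_affine_fits[of X] subspace_0[OF subspace_affine_fits[of X]]
  by (intro closest_point_in_set) (auto simp: closed_subspace)

lemma ls_risk_le:
  assumes "f \<in> affine_fits X"
  shows "ls_risk X Y \<le> (norm (f - Y))\<^sup>2 / 2"
  using assms unfolding ls_risk_def affine_fits_def
  by (intro cInf_lower bdd_belowI[of _ 0]) force+

lemma ls_risk_closest_point:
  fixes X :: "real^'m^'dx"
  shows "ls_risk X Y = (norm (Y - closest_point (affine_fits X) Y))\<^sup>2 / 2"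
proof -
  let ?S = "affine_fits X" and ?p = "closest_point (affine_fits X) Y"
  have "?p \<in> ?S" by (rule closest_point_in_affine_fits)
  then have le: "ls_risk X Y \<le> (norm (Y - ?p))\<^sup>2 / 2"
    using ls_risk_le[of ?p X Y] by (simp add: norm_minus_commute)
  have "(norm (Y - ?p))\<^sup>2 / 2 \<le> ls_risk X Y"
    unfolding ls_risk_def
  proof (rule cInf_greatest)
    fix x
    assume "x \<in> {(1/2) * (norm (w v* X + (\<chi> j. c) - Y))\<^sup>2 | (w :: real^'dx) (c :: real). True}"
    then obtain f where f: "f \<in> ?S" "x = (norm (f - Y))\<^sup>2 / 2"
      by (auto simp: affine_fits_def)
    have "norm (Y - ?p) \<le> norm (f - Y)"
      using closest_point_le[OF closed_subspace[OF subspace_affine_fits] f(1), of Y]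
      by (simp add: dist_norm norm_minus_commute)
    then show "(norm (Y - ?p))\<^sup>2 / 2 \<le> x" using f(2) by (simp add: power_mono)
  qed blast
  with le show ?thesis by linarith
qed

lemma leaky_pos: "sp > 0 \<Longrightarrow> sm \<ge> 0 \<Longrightarrow> z > 0 \<Longrightarrow> leaky sp sm z = sp * z"
  by (simp add: leaky_def max_absorb1 min_absorb2)

lemma leaky_eq_linear_plus_relu:
  assumes "sp \<ge> 0" "sm \<ge> 0"
  shows "leaky sp sm z = sm * z + (sp - sm) * max z 0"
  using assms by (cases "z \<ge> 0") (auto simp: leaky_def max_def min_def algebra_simps mult_le_0_iff)

lemma risk_nonneg: "0 \<le> risk h X Y p"
  by (simp add: risk_def split: prod.splits)

lemma risk_eq_sum:
  "risk h X Y (W1, b1, W2, b2) =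
     (norm ((\<chi> j. (\<Sum>k\<in>UNIV. W2$k * h ((\<Sum>i\<in>UNIV. W1$k$i * X$i$j) + b1$k)) + b2) - Y))\<^sup>2 / 2"
  by (simp add: risk_def vector_matrix_mult_def matrix_matrix_mult_def plus_vec_def mult.commute)

lemma risk_on_positive_region:
  assumes h: "\<And>z. z > 0 \<Longrightarrow> h z = s * z"
    and pos: "\<And>k j. 0 < (W1 ** X)$k$j + b1$k"
  shows "risk h X Y (W1, b1, W2, b2) =
     (norm ((\<chi> i. \<Sum>k\<in>UNIV. W2$k * s * W1$k$i) v* X
            + (\<chi> j. (\<Sum>k\<in>UNIV. W2$k * s * b1$k) + b2) - Y))\<^sup>2 / 2"
proof -
  have "(\<Sum>k\<in>UNIV. W2$k * h ((\<Sum>i\<in>UNIV. W1$k$i * X$i$j) + b1$k))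
      = (\<Sum>i\<in>UNIV. (\<Sum>k\<in>UNIV. W2$k * s * W1$k$i) * X$i$j) + (\<Sum>k\<in>UNIV. W2$k * s * b1$k)" for j
  proof -
    have "(\<Sum>k\<in>UNIV. W2$k * h ((\<Sum>i\<in>UNIV. W1$k$i * X$i$j) + b1$k))
        = (\<Sum>k\<in>UNIV. \<Sum>i\<in>UNIV. W2$k * s * W1$k$i * X$i$j) + (\<Sum>k\<in>UNIV. W2$k * s * b1$k)"
      using pos[of _ j]
      by (simp add: h matrix_matrix_mult_def mult.commute sum.distrib sum_distrib_left algebra_simps)
    also have "\<dots> = (\<Sum>i\<in>UNIV. (\<Sum>k\<in>UNIV. W2$k * s * W1$k$i) * X$i$j) + (\<Sum>k\<in>UNIV. W2$k * s * b1$k)"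
      by (subst sum.swap) (simp add: sum_distrib_right)
    finally show ?thesis .
  qed
  then show ?thesis
    by (simp add: risk_eq_sum vector_matrix_mult_def plus_vec_def add.assoc)
qed

definition positive_region :: "real^'m^'dx \<Rightarrow> ('dx, 'd1::finite) params set" where
  "positive_region X = {p. \<forall>k j. 0 < (fst p ** X)$k$j + fst (snd p) $ k}"

lemma open_positive_region: "open (positive_region X)"
proof -
  have eq: "positive_region X
      = (\<Inter>k. \<Inter>j. {p. 0 < (\<Sum>i\<in>UNIV. fst p $ k $ i * X$i$j) + fst (snd p) $ k})"
    by (auto simp: positive_region_def matrix_matrix_mult_def)
  show ?thesis
    unfolding eq by (intro open_INT ballI finite open_Collect_less continuous_intros)
qed

lemma ls_risk_le_risk_on_positive_region:
  assumes h: "\<And>z. z > 0 \<Longrightarrow> h z = s * z" and p: "p \<in> positive_region X"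
  shows "ls_risk X Y \<le> risk h X Y p"
proof -
  obtain W1 b1 W2 b2 where p_eq: "p = (W1, b1, W2, b2)" by (cases p) auto
  have "\<And>k j. 0 < (W1 ** X)$k$j + b1$k" using p by (simp add: positive_region_def p_eq)
  from risk_on_positive_region[OF h this, of Y W2 b2] show ?thesis
    unfolding p_eq by (simp only:) (rule ls_risk_le, unfold affine_fits_def, blast)
qed

lemma infinite_local_minima_at_ls_risk:
  fixes X :: "real^'m^'dx" and Y :: "real^'m"
  assumes h: "\<And>z. z > 0 \<Longrightarrow> h z = s * z" and s: "s \<noteq> 0"
  shows "infinite {p :: ('dx, 'd1::finite) params.
                   is_local_min (risk h X Y) p \<and> risk h X Y p = ls_risk X Y}"
proof -
  define yh where "yh = closest_point (affine_fits X) Y"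
  obtain w c where yh_eq: "yh = w v* X + (\<chi> j. c)"
    using closest_point_in_affine_fits[of X Y] by (auto simp: affine_fits_def yh_def)
  define P :: "real \<Rightarrow> ('dx, 'd1) params" where
    "P t = ((\<chi> k. w), (\<chi> k. c + t), (\<chi> k. 1 / (s * CARD('d1))), - t)" for t
  have P_pos: "P t \<in> positive_region X" if "t > norm yh" for t
  proof -
    have "0 < yh$j + t" for j using component_le_norm_cart[of yh j] that by linarith
    then show ?thesis
      by (simp add: positive_region_def P_def yh_eq matrix_matrix_mult_def vector_matrix_mult_def
          mult.commute add.assoc)
  qed
  have P_risk: "risk h X Y (P t) = ls_risk X Y" if "t > norm yh" for t
  proof -
    have "\<And>k j. 0 < ((\<chi> k. w) ** X)$k$j + (\<chi> k. c + t :: real^'d1)$k"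
      using P_pos[OF that] by (simp add: positive_region_def P_def)
    from risk_on_positive_region[OF h this]
    have "risk h X Y (P t) = (norm (yh - Y))\<^sup>2 / 2"
      using s by (simp add: P_def yh_eq vec_eq_iff vector_matrix_mult_def)
    then show ?thesis
      by (simp add: ls_risk_closest_point yh_def norm_minus_commute)
  qed
  have "P ` {norm yh <..} \<subseteq> {p. is_local_min (risk h X Y) p \<and> risk h X Y p = ls_risk X Y}"
    unfolding is_local_min_def
    using open_positive_region P_pos P_risk ls_risk_le_risk_on_positive_region[OF h]
    by fastforce
  moreover have "inj_on P {norm yh <..}"
    by (rule inj_onI) (simp add: P_def)
  then have "infinite (P ` {norm yh <..})"
    using infinite_Ioi finite_imageD by blast
  ultimately show ?thesis
    using infinite_super by blast
qed

lemma exists_affine_unit_isolating_point: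
  fixes X :: "real^'m^'dx"
  assumes inj: "inj_on (\<lambda>j. column j X) A" and A: "A \<noteq> {}"
  shows "\<exists>js\<in>A. \<exists>u b. 0 < (u v* X)$js + b \<and> (\<forall>j\<in>A - {js}. (u v* X)$j + b < 0)"
proof -
  let ?nx = "\<lambda>j. norm (column j X)"
  have "Max (?nx ` A) \<in> ?nx ` A" using A by (intro Max_in) auto
  then obtain js where js: "js \<in> A" "Max (?nx ` A) = ?nx js" by blast
  have js_max: "?nx j \<le> ?nx js" if "j \<in> A" for j
    unfolding js(2)[symmetric] using that by (intro Max_ge) auto
  define xs where "xs = column js X"
  \<comment> \<open>z j = |x_j|^2 - |x_j - xs|^2 with xs of largest norm, so z is uniquely maximal at js\<close>
  define z where "z j = 2 * inner xs (column j X) - (norm xs)\<^sup>2" for j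
  have z_js: "z js = (norm xs)\<^sup>2"
    by (simp add: z_def xs_def power2_norm_eq_inner)
  have z_lt: "z j < (norm xs)\<^sup>2" if "j \<in> A - {js}" for j
  proof -
    have "column j X \<noteq> xs" using inj that js(1) unfolding xs_def inj_on_def by blast
    then have "0 < (norm (column j X - xs))\<^sup>2" by simp
    also have "\<dots> = (?nx j)\<^sup>2 - z j"
      by (simp add: z_def power2_norm_eq_inner inner_diff_left inner_diff_right inner_commute)
    also have "\<dots> \<le> (norm xs)\<^sup>2 - z j"
      using js_max that by (simp add: xs_def power_mono)
    finally show ?thesis by simp
  qed
  define m where "m = Max (insert ((norm xs)\<^sup>2 - 1) (z ` (A - {js})))"
  have m_lt: "m < (norm xs)\<^sup>2" using z_lt by (simp add: m_def)
  have z_le: "z j \<le> m" if "j \<in> A - {js}" for j using that by (simp add: m_def)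
  define t where "t = (m + (norm xs)\<^sup>2) / 2"
  have unit: "((2 *\<^sub>R xs) v* X)$j + (- (norm xs)\<^sup>2 - t) = z j - t" for j
    by (simp add: vector_matrix_mult_nth z_def)
  have "0 < z js - t" using z_js m_lt by (simp add: t_def)
  moreover have "z j - t < 0" if "j \<in> A - {js}" for j using z_le[OF that] m_lt by (simp add: t_def)
  ultimately show ?thesis
    using js(1) unfolding unit[symmetric] by blast
qed

lemma inner_leaky_isolating_unit:
  fixes z r :: "real^'m"
  assumes "sp \<ge> 0" "sm \<ge> 0"
    and orth: "inner z r = 0"
    and pos: "z$js > 0" and iso: "\<And>j. j \<noteq> js \<Longrightarrow> r$j = 0 \<or> z$j \<le> 0"
  shows "inner (\<chi> j. leaky sp sm (z$j)) r = (sp - sm) * z$js * r$js"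
proof -
  have split: "(\<chi> j. leaky sp sm (z$j)) = sm *\<^sub>R z + (sp - sm) *\<^sub>R (\<chi> j. max (z$j) 0)"
    using assms(1,2) by (simp add: vec_eq_iff leaky_eq_linear_plus_relu)
  have "max (z$j) 0 * r$j = (if j = js then z$js * r$js else 0)" for j
    using pos iso[of j] by (cases "j = js") (auto simp: max_def)
  then have "inner (\<chi> j. max (z$j) 0) r = z$js * r$js"
    by (simp add: inner_vec_def)
  then show ?thesis
    using orth by (simp add: split inner_add_left)
qed

lemma exists_params_fit_plus_unit:
  fixes X :: "real^'m^'dx" and Y :: "real^'m"
  assumes h: "\<And>z. z > 0 \<Longrightarrow> h z = s * z" and s: "s \<noteq> 0" and d1: "CARD('d1::finite) \<ge> 2"
    and f: "f \<in> affine_fits X"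
  shows "\<exists>q :: ('dx, 'd1) params.
           risk h X Y q = (norm (f + e *\<^sub>R (\<chi> j. h ((u v* X)$j + b)) - Y))\<^sup>2 / 2"
proof -
  obtain k1 k2 :: 'd1 where k12: "k1 \<noteq> k2"
    using d1 card_le_Suc0_iff_eq[of "UNIV :: 'd1 set"] by fastforce
  obtain w c where f_eq: "f = w v* X + (\<chi> j. c)" using f by (auto simp: affine_fits_def)
  \<comment> \<open>Unit k1 reproduces f, lifted by \<beta> into the region where h is linear; the output bias
    removes \<beta> again. Unit k2 is the extra unit.\<close>
  define \<beta> where "\<beta> = norm f + 1"
  have f_shift: "0 < f$j + \<beta>" for j
    using component_le_norm_cart[of f j] by (simp add: \<beta>_def)
  define W1 :: "real^'dx^'d1" where "W1 = (\<chi> k. if k = k2 then u else w)"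
  define b1 :: "real^'d1" where "b1 = (\<chi> k. if k = k2 then b else c + \<beta>)"
  define W2 :: "real^'d1" where "W2 = (\<chi> k. if k = k2 then e else if k = k1 then 1 / s else 0)"
  have units: "(\<Sum>k\<in>UNIV. W2$k * h ((\<Sum>i\<in>UNIV. W1$k$i * X$i$j) + b1$k))
      = e * h ((u v* X)$j + b) + (f$j + \<beta>)" for j
  proof -
    have "W2$k * h ((\<Sum>i\<in>UNIV. W1$k$i * X$i$j) + b1$k)
        = (if k = k2 then e * h ((u v* X)$j + b) else 0) + (if k = k1 then f$j + \<beta> else 0)" for k
      using k12 s h[OF f_shift[of j]]
      by (auto simp: W1_def b1_def W2_def f_eq vector_matrix_mult_def mult.commute add.assoc)
    then show ?thesis by (simp add: sum.distrib)
  qed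
  have "(\<chi> j. (\<Sum>k\<in>UNIV. W2$k * h ((\<Sum>i\<in>UNIV. W1$k$i * X$i$j) + b1$k)) + - \<beta>)
      = f + e *\<^sub>R (\<chi> j. h ((u v* X)$j + b))"
    by (simp add: units vec_eq_iff)
  then have "risk h X Y (W1, b1, W2, - \<beta>) = (norm (f + e *\<^sub>R (\<chi> j. h ((u v* X)$j + b)) - Y))\<^sup>2 / 2"
    unfolding risk_eq_sum by simp
  then show ?thesis by blast
qed

lemma exists_risk_below_ls_risk:
  fixes X :: "real^'m^'dx" and Y :: "real^'m"
  assumes not_fit: "Y \<notin> affine_fits X" and inj: "inj (\<lambda>j. column j X)"
    and sp: "sp > 0" and sm: "sm \<ge> 0" and neq: "sp \<noteq> sm"
    and d1: "CARD('d1::finite) \<ge> 2"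
  shows "\<exists>q :: ('dx, 'd1) params. risk (leaky sp sm) X Y q < ls_risk X Y"
proof -
  define yh where "yh = closest_point (affine_fits X) Y"
  define r where "r = Y - yh"
  have yh_fit: "yh \<in> affine_fits X"
    unfolding yh_def by (rule closest_point_in_affine_fits)
  have orth: "inner f r = 0" if "f \<in> affine_fits X" for f
    using closest_point_subspace_orthogonal[OF subspace_affine_fits that, of Y]
    by (simp add: r_def yh_def inner_commute)
  have "r \<noteq> 0" using not_fit yh_fit by (auto simp: r_def)
  then have "{j. r$j \<noteq> 0} \<noteq> {}" by (auto simp: vec_eq_iff)
  from exists_affine_unit_isolating_point[OF inj_on_subset[OF inj subset_UNIV] this]
  obtain js u b where js: "r$js \<noteq> 0" "0 < (u v* X)$js + b"
    and iso: "\<And>j. j \<noteq> js \<Longrightarrow> r$j \<noteq> 0 \<Longrightarrow> (u v* X)$j + b < 0"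
    by blast
  define z where "z = u v* X + (\<chi> j. b)"
  define g where "g = (\<chi> j. leaky sp sm (z$j))"
  have "z \<in> affine_fits X" by (auto simp: z_def affine_fits_def)
  then have "inner z r = 0" by (rule orth)
  moreover have "r$j = 0 \<or> z$j \<le> 0" if "j \<noteq> js" for j
    using iso[OF that] by (force simp: z_def)
  ultimately have "inner g r = (sp - sm) * z$js * r$js"
    unfolding g_def using sp sm js by (intro inner_leaky_isolating_unit) (auto simp: z_def)
  then have "inner g r \<noteq> 0" using neq js by (simp add: z_def)
  then obtain e where e: "norm (e *\<^sub>R g - r) < norm r"
    using exists_scaleR_closer by blast
  obtain q :: "('dx, 'd1) params"
    where "risk (leaky sp sm) X Y q = (norm (yh + e *\<^sub>R g - Y))\<^sup>2 / 2"
    using exists_params_fit_plus_unit[OF leaky_pos[OF sp sm] _ d1 yh_fit,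
        where Y = Y and e = e and u = u and b = b] sp
    by (auto simp: g_def z_def)
  also have "\<dots> < (norm r)\<^sup>2 / 2"
    using e by (simp add: r_def algebra_simps power_strict_mono)
  also have "\<dots> = ls_risk X Y"
    by (simp add: ls_risk_closest_point r_def yh_def)
  finally show ?thesis by blast
qed

theorem theorem1:
  fixes X :: "real^'m^'dx" and Y :: "real^'m"
    and sp sm :: real
  assumes not_linear: "\<not> (\<exists>(w :: real^'dx) (c :: real). Y = w v* X + (\<chi> j. c))"
    and distinct: "inj (\<lambda>j. column j X)"
    and sp: "sp > 0" and sm: "sm \<ge> 0" and neq: "sp \<noteq> sm"
    and d1: "CARD('d1::finite) \<ge> 2"
  shows "infinite {p :: (real^'dx^'d1) \<times> (real^'d1) \<times> (real^'d1) \<times> real.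
            is_spurious_local_min (risk (leaky sp sm) X Y) p
            \<and> risk (leaky sp sm) X Y p = ls_risk X Y}"
proof -
  have "Y \<notin> affine_fits X" using not_linear by (auto simp: affine_fits_def)
  then obtain q :: "('dx, 'd1) params" where q: "risk (leaky sp sm) X Y q < ls_risk X Y"
    using exists_risk_below_ls_risk[OF _ distinct sp sm neq d1] by blast
  have "(INF p :: ('dx, 'd1) params. risk (leaky sp sm) X Y p) \<le> risk (leaky sp sm) X Y q"
    by (intro cINF_lower bdd_belowI2[of _ 0]) (auto simp: risk_nonneg)
  with q have "(INF p :: ('dx, 'd1) params. risk (leaky sp sm) X Y p) < ls_risk X Y"
    by linarith
  then have "{p :: ('dx, 'd1) params.
                 is_local_min (risk (leaky sp sm) X Y) p \<and> risk (leaky sp sm) X Y p = ls_risk X Y}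
      \<subseteq> {p. is_spurious_local_min (risk (leaky sp sm) X Y) p \<and> risk (leaky sp sm) X Y p = ls_risk X Y}"
    by (auto simp: is_spurious_local_min_def)
  moreover have "infinite {p :: ('dx, 'd1) params.
      is_local_min (risk (leaky sp sm) X Y) p \<and> risk (leaky sp sm) X Y p = ls_risk X Y}"
    using sp by (intro infinite_local_minima_at_ls_risk[of _ sp]) (auto simp: leaky_pos sm)
  ultimately show ?thesis
    using infinite_super by blast
qed

end
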